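(* Consider the one-dimensional Dirac equation described in the context, with exact solution $\varPhi$ on $[0,T]\times[a,b]$, and suppose assumptions (A) and (B) of the context hold. Then there exist constants $h_0>0$, $\tau_0>0$, independent of $\varepsilon$ and sufficiently small, such that for every $0<\varepsilon\le1$, $0<h\le h_0$ and $0<\tau\le\tau_0$, the solution $\varPhi^n$ of the CNFD scheme described in the context satisfies $$\|\mathbf{e}^n\|_{l^2}\lesssim\frac{h^2}{\varepsilon}+\frac{\tau^2}{\varepsilon^3},\qquad 0\le n\le \frac{T}{\tau},$$ where $\mathbf{e}^n_j=\varPhi(t_n,x_j)-\varPhi^n_j$ and $\|\mathbf{e}^n\|_{l^2}^2=h\sum_{j=0}^{M-1}|\mathbf{e}^n_j|^2$, and $p\lesssim q$ means $|p|\le Cq$ with $C>0$ independent of $\varepsilon,\tau,h,n$.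
   Context: Pauli matrices: $\sigma_1=\begin{pmatrix}0&1\\1&0\end{pmatrix}$, $\sigma_3=\begin{pmatrix}1&0\\0&-1\end{pmatrix}$; $I_2$ the $2\times2$ identity. Let $\Omega=(a,b)$, $0<\varepsilon\le1$, and $V,A_1$ real-valued. The equation is, for $\varPhi=(\phi_1,\phi_2)^T:[0,T]\times\bar\Omega\to\mathbb{C}^2$, $$i\partial_t\varPhi=\Big(-\frac{i}{\varepsilon}\sigma_1\partial_x+\frac1\varepsilon\sigma_3\Big)\varPhi+\big(V(t,x)I_2-A_1(t,x)\sigma_1\big)\varPhi,\quad t>0,\ x\in\Omega,$$ with periodic boundary conditions $\varPhi(t,a)=\varPhi(t,b)$, $\partial_x\varPhi(t,a)=\partial_x\varPhi(t,b)$ and initial data $\varPhi(0,x)=\varPhi_0(x)$, where $\varPhi_0(a)=\varPhi_0(b)$, $\varPhi_0'(a)=\varPhi_0'(b)$. Let $0<T<T^*$, $T^*$ the maximal existence time, $\Omega_T=[0,T]\times\Omega$. Assumption (A): $\varPhi\in C^3([0,T];(L^\infty)^2)\cap C^2([0,T];(W^{1,\infty}_p)^2)\cap C^1([0,T];(W^{2,\infty}_p)^2)\cap C([0,T];(W^{3,\infty}_p)^2)$ and $\|\partial_t^r\partial_x^s\varPhi\|_{L^\infty([0,T];(L^\infty(\Omega))^2)}\lesssim\varepsilon^{-r}$ for $0\le r\le3$, $0\le r+s\le3$, uniformly in $0<\varepsilon\le1$; here $W^{m,\infty}_p(\Omega)=\{u\in W^{m,\infty}(\Omega):\partial_x^lu(a)=\partial_x^lu(b),\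 l=0,\dots,m-1\}$. Assumption (B): $V,A_1\in C(\bar\Omega_T)$; set $V_{\max}=\max_{\bar\Omega_T}|V|$, $A_{1,\max}=\max_{\bar\Omega_T}|A_1|$. Discretization: $M\in\mathbb{N}$, $h=(b-a)/M$, $x_j=a+jh$, $\tau>0$, $t_n=n\tau$; periodic grid convention $\varPhi^n_M=\varPhi^n_0$, $\varPhi^n_{-1}=\varPhi^n_{M-1}$, $\varPhi^n_{M+1}=\varPhi^n_1$. $\delta_t^+\varPhi^n_j=(\varPhi^{n+1}_j-\varPhi^n_j)/\tau$, $\delta_x\varPhi^n_j=(\varPhi^n_{j+1}-\varPhi^n_{j-1})/(2h)$, $\varPhi^{n+1/2}_j=(\varPhi^{n+1}_j+\varPhi^n_j)/2$, $V^{n+1/2}_j=V(t_n+\tau/2,x_j)$, $A^{n+1/2}_{1,j}=A_1(t_n+\tau/2,x_j)$. CNFD scheme: for $n\ge0$, $j=0,\dots,M-1$, $$i\delta_t^+\varPhi^n_j=\frac1\varepsilon(-i\sigma_1\delta_x+\sigma_3)\varPhi^{n+1/2}_j+\big(V^{n+1/2}_jI_2-A^{n+1/2}_{1,j}\sigma_1\big)\varPhi^{n+1/2}_j,$$ with $\varPhi^{n+1}_M=\varPhi^{n+1}_0$, $\varPhi^{n+1}_{-1}=\varPhi^{n+1}_{M-1}$, $\varPhi^0_j=\varPhi_0(x_j)$ for $j=0,\dots,M$. *)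

theory Defs
  imports "HOL-Analysis.Analysis"
begin

text \<open>Spinors are elements of complex^2 (Euclidean norm, so norm e = |e| as in the paper);
  2x2 complex matrices are complex^2^2 acting by *v.\<close>

definition sigma1 :: "complex^2^2" where
  "sigma1 = (\<chi> i j. if i = j then 0 else 1)"

definition sigma3 :: "complex^2^2" where
  "sigma3 = (\<chi> i j. if i = j then (if i = 1 then 1 else -1) else 0)"

definition I2 :: "complex^2^2" where
  "I2 = mat 1"

definition mscale :: "complex \<Rightarrow> complex^2^2 \<Rightarrow> complex^2^2" where
  "mscale c A = (\<chi> i j. c * A $ i $ j)"

text \<open>Right-hand side operator of the Dirac equation applied to a spinor u with
  x-derivative ux, at a point with potentials v = V(t,x), w = A1(t,x).\<close>
definition dirac_rhs :: "real \<Rightarrow> real \<Rightarrow> real \<Rightarrow> complex^2 \<Rightarrow> complex^2 \<Rightarrow> complex^2" where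
  "dirac_rhs \<epsilon> v w ux u =
     (complex_of_real (1/\<epsilon>)) *s ((- \<i>) *s (sigma1 *v ux) + sigma3 *v u)
     + (mscale (complex_of_real v) I2 - mscale (complex_of_real w) sigma1) *v u"

text \<open>Exact solution on [0,T] x [a,b] in the sense of assumption (A), for a fixed \<epsilon>:
  D r s t x stands for the partial derivative d_t^r d_x^s Phi(t,x).
  All derivatives of order \<le> 2 exist classically, are continuous on the closed
  domain and periodic in x; the third-order derivatives (in L^\<infinity>) are encoded
  as Lipschitz bounds on the second-order derivatives.\<close>
definition dirac_solution ::
  "real \<Rightarrow> real \<Rightarrow> real \<Rightarrow> real \<Rightarrow> real \<Rightarrow> (real \<Rightarrow> real \<Rightarrow> real)
     \<Rightarrow> (real \<Rightarrow> real \<Rightarrow> real) \<Rightarrow> (nat \<Rightarrow> nat \<Rightarrow> real \<Rightarrow> real \<Rightarrow> complex^2) \<Rightarrow> bool" where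
  "dirac_solution a b T K \<epsilon> V A1 D \<longleftrightarrow>
     \<comment> \<open>classical derivatives (orders up to 2)\<close>
     (\<forall>r s t x. r + s \<le> 1 \<longrightarrow> t \<in> {0..T} \<longrightarrow> x \<in> {a..b} \<longrightarrow>
        ((\<lambda>t'. D r s t' x) has_vector_derivative D (Suc r) s t x) (at t within {0..T}) \<and>
        ((\<lambda>x'. D r s t x') has_vector_derivative D r (Suc s) t x) (at x within {a..b})) \<and>
     \<comment> \<open>continuity on the closed domain\<close>
     (\<forall>r s. r + s \<le> 2 \<longrightarrow> continuous_on ({0..T} \<times> {a..b}) (\<lambda>(t,x). D r s t x)) \<and>
     \<comment> \<open>periodicity in x\<close>
     (\<forall>r s t. r + s \<le> 2 \<longrightarrow> t \<in> {0..T} \<longrightarrow> D r s t a = D r s t b) \<and>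
     \<comment> \<open>bounds  |d_t^r d_x^s Phi| \<le> K \<epsilon>^(-r),  r + s \<le> 2\<close>
     (\<forall>r s t x. r + s \<le> 2 \<longrightarrow> t \<in> {0..T} \<longrightarrow> x \<in> {a..b} \<longrightarrow>
        norm (D r s t x) \<le> K / \<epsilon> ^ r) \<and>
     \<comment> \<open>third order: Lipschitz bounds of the second-order derivatives\<close>
     (\<forall>r s t t' x. r + s = 2 \<longrightarrow> t \<in> {0..T} \<longrightarrow> t' \<in> {0..T} \<longrightarrow> x \<in> {a..b} \<longrightarrow>
        norm (D r s t x - D r s t' x) \<le> K / \<epsilon> ^ (Suc r) * \<bar>t - t'\<bar>) \<and>
     (\<forall>r s t x x'. r + s = 2 \<longrightarrow> t \<in> {0..T} \<longrightarrow> x \<in> {a..b} \<longrightarrow> x' \<in> {a..b} \<longrightarrow>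
        norm (D r s t x - D r s t x') \<le> K / \<epsilon> ^ r * \<bar>x - x'\<bar>) \<and>
     \<comment> \<open>the Dirac equation\<close>
     (\<forall>t x. t \<in> {0..T} \<longrightarrow> x \<in> {a<..<b} \<longrightarrow>
        \<i> *s D 1 0 t x = dirac_rhs \<epsilon> (V t x) (A1 t x) (D 0 1 t x) (D 0 0 t x))"

text \<open>CNFD scheme on the periodic grid x_j = a + j h, j = 0..M-1 (indices mod M),
  h = (b-a)/M, time steps t_n = n \<tau>, imposed for all steps with t_{n+1} \<le> T,
  initial data Phi^0_j = Phi_0(x_j).\<close>
definition cnfd_solution ::
  "real \<Rightarrow> real \<Rightarrow> real \<Rightarrow> real \<Rightarrow> (real \<Rightarrow> real \<Rightarrow> real) \<Rightarrow> (real \<Rightarrow> real \<Rightarrow> real)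
     \<Rightarrow> (real \<Rightarrow> complex^2) \<Rightarrow> nat \<Rightarrow> real \<Rightarrow> (nat \<Rightarrow> nat \<Rightarrow> complex^2) \<Rightarrow> bool" where
  "cnfd_solution a b T \<epsilon> V A1 Phi0 M \<tau> P \<longleftrightarrow>
     (let h = (b - a) / real M in
      (\<forall>j<M. P 0 j = Phi0 (a + real j * h)) \<and>
      (\<forall>n j. real (Suc n) * \<tau> \<le> T \<longrightarrow> j < M \<longrightarrow>
         (let Q = (\<lambda>k. (1/2 :: complex) *s (P (Suc n) k + P n k));
              tm = real n * \<tau> + \<tau> / 2; xj = a + real j * h in
          \<i> *s ((complex_of_real (1/\<tau>)) *s (P (Suc n) j - P n j)) =
            dirac_rhs \<epsilon> (V tm xj) (A1 tm xj)
              ((complex_of_real (1 / (2*h))) *s (Q ((j + 1) mod M) - Q ((j + M - 1) mod M)))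
              (Q j))))"

definition grid_l2 :: "nat \<Rightarrow> real \<Rightarrow> (nat \<Rightarrow> complex^2) \<Rightarrow> real" where
  "grid_l2 M h e = sqrt (h * (\<Sum>j<M. (norm (e j))\<^sup>2))"

end

theory Submission
  imports Defs
begin

text \<open>
  The error \<open>e\<^sup>n\<^sub>j = \<Phi>(t\<^sub>n, x\<^sub>j) - \<Phi>\<^sup>n\<^sub>j\<close> satisfies the CNFD scheme with the local truncation
  error \<open>\<xi>\<^sup>n\<close> as source term. Pairing the scheme with the Crank-Nicolson average
  \<open>(e\<^sup>n\<^sup>+\<^sup>1 + e\<^sup>n)/2\<close> in the real inner product, the Hermitian mass and potential terms drop
  out pointwise, and the periodic central difference drops out after summation by parts because
  \<open>\<sigma>\<^sub>1\<close> is symmetric. Hence \<open>\<parallel>e\<^sup>n\<^sup>+\<^sup>1\<parallel> \<le> \<parallel>e\<^sup>n\<parallel> + \<tau> \<parallel>\<xi>\<^sup>n\<parallel>\<close> in the discrete \<open>l\<^sup>2\<close> norm, for all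
  \<open>h\<close> and \<open>\<tau>\<close>. Taylor expansion about the half step \<open>t\<^sub>n + \<tau>/2\<close> bounds \<open>\<xi>\<^sup>n\<close> by
  \<open>h\<^sup>2/\<epsilon> + \<tau>\<^sup>2/\<epsilon>\<^sup>3\<close>: every time derivative of \<open>\<Phi>\<close> costs a factor \<open>1/\<epsilon>\<close>, and the
  spatial truncation error enters through the transport term \<open>\<sigma>\<^sub>1 \<partial>\<^sub>x/\<epsilon>\<close>. Summing the
  one-step estimate over \<open>n \<le> T/\<tau>\<close> gives the claim.
\<close>

section \<open>Taylor estimates\<close>

lemma taylor_first_order_remainder:
  fixes f f' :: "real \<Rightarrow> 'a::real_normed_vector"
  assumes "convex S"
    and der: "\<And>y. y \<in> S \<Longrightarrow> (f has_vector_derivative f' y) (at y within S)"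
    and lip: "\<And>y. y \<in> S \<Longrightarrow> norm (f' y - f' x0) \<le> B * \<bar>y - x0\<bar>"
    and "x0 \<in> S" "x \<in> S" "B \<ge> 0"
  shows "norm (f x - f x0 - (x - x0) *\<^sub>R f' x0) \<le> B * (x - x0)\<^sup>2"
proof -
  let ?I = "closed_segment x0 x"
  have I: "?I \<subseteq> S"
    using assms by (simp add: closed_segment_subset)
  have "norm (f x - f x0 - (x - x0) *\<^sub>R f' x0) \<le> norm (x - x0) * (B * \<bar>x - x0\<bar>)"
  proof (rule vector_differentiable_bound_linearization[where S = ?I])
    show "(f has_vector_derivative f' y) (at y within ?I)" if "y \<in> ?I" for y
      using der I that by (meson has_vector_derivative_within_subset subsetD)
    show "norm (f' y - f' x0) \<le> B * \<bar>x - x0\<bar>" if "y \<in> ?I" for y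
    proof -
      have "\<bar>y - x0\<bar> \<le> \<bar>x - x0\<bar>"
        using dist_in_closed_segment[OF that] by (simp add: dist_real_def abs_minus_commute)
      then show ?thesis
        using lip[of y] I that \<open>B \<ge> 0\<close> by (meson mult_left_mono order_trans subsetD)
    qed
  qed auto
  then show ?thesis
    by (simp add: power2_eq_square mult_ac)
qed

lemma taylor_second_order_remainder:
  fixes f f' f'' :: "real \<Rightarrow> 'a::real_normed_vector"
  assumes "convex S"
    and der: "\<And>y. y \<in> S \<Longrightarrow> (f has_vector_derivative f' y) (at y within S)"
    and der2: "\<And>y. y \<in> S \<Longrightarrow> (f' has_vector_derivative f'' y) (at y within S)"
    and lip: "\<And>y. y \<in> S \<Longrightarrow> norm (f'' y - f'' x0) \<le> L * \<bar>y - x0\<bar>"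
    and "x0 \<in> S" "x \<in> S" "L \<ge> 0"
  shows "norm (f x - f x0 - (x - x0) *\<^sub>R f' x0 - ((x - x0)\<^sup>2 / 2) *\<^sub>R f'' x0) \<le> L * \<bar>x - x0\<bar> ^ 3"
proof -
  let ?I = "closed_segment x0 x"
  have I: "?I \<subseteq> S"
    using assms by (simp add: closed_segment_subset)
  define G where "G y = f y - ((y - x0)\<^sup>2 / 2) *\<^sub>R f'' x0" for y
  define G' where "G' y = f' y - (y - x0) *\<^sub>R f'' x0" for y
  have "norm (G x - G x0 - (x - x0) *\<^sub>R G' x0) \<le> norm (x - x0) * (L * (x - x0)\<^sup>2)"
  proof (rule vector_differentiable_bound_linearization[where S = ?I])
    show "(G has_vector_derivative G' y) (at y within ?I)" if "y \<in> ?I" for y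
      unfolding G_def G'_def
      using has_vector_derivative_within_subset[OF der I] I that
      by (auto intro!: derivative_eq_intros)
    show "norm (G' y - G' x0) \<le> L * (x - x0)\<^sup>2" if "y \<in> ?I" for y
    proof -
      have "\<bar>y - x0\<bar> \<le> \<bar>x - x0\<bar>"
        using dist_in_closed_segment[OF that] by (simp add: dist_real_def abs_minus_commute)
      then have "(y - x0)\<^sup>2 \<le> (x - x0)\<^sup>2"
        by (simp add: abs_le_square_iff)
      moreover have "norm (G' y - G' x0) \<le> L * (y - x0)\<^sup>2"
        using taylor_first_order_remainder[OF \<open>convex S\<close> der2 lip] assms I that
        by (auto simp: G'_def algebra_simps)
      ultimately show ?thesis
        using \<open>L \<ge> 0\<close> by (meson mult_left_mono order_trans)
    qed
  qed auto
  moreover have "G x - G x0 - (x - x0) *\<^sub>R G' x0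
      = f x - f x0 - (x - x0) *\<^sub>R f' x0 - ((x - x0)\<^sup>2 / 2) *\<^sub>R f'' x0"
    unfolding G_def G'_def by (simp add: algebra_simps)
  ultimately show ?thesis
    by (simp add: power2_eq_square power3_eq_cube mult_ac)
qed

lemma lipschitz_of_vector_derivative_bound:
  fixes f f' :: "real \<Rightarrow> 'a::real_normed_vector"
  assumes "convex S"
    and der: "\<And>y. y \<in> S \<Longrightarrow> (f has_vector_derivative f' y) (at y within S)"
    and bound: "\<And>y. y \<in> S \<Longrightarrow> norm (f' y) \<le> B"
    and "x \<in> S" "y \<in> S"
  shows "norm (f x - f y) \<le> B * \<bar>x - y\<bar>"
proof -
  have "norm (f x - f y) \<le> B * norm (x - y)"
  proof (rule differentiable_bound[OF \<open>convex S\<close> _ _ \<open>x \<in> S\<close> \<open>y \<in> S\<close>])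
    show "(f has_derivative (\<lambda>h. h *\<^sub>R f' z)) (at z within S)" if "z \<in> S" for z
      using der[OF that] by (simp add: has_vector_derivative_def)
    show "onorm (\<lambda>h. h *\<^sub>R f' z) \<le> B" if "z \<in> S" for z
      using bound[OF that] by (intro onorm_le) (simp add: mult_left_mono mult.commute[of B])
  qed
  then show ?thesis
    by simp
qed

lemma midpoint_average_error:
  fixes f f' :: "real \<Rightarrow> 'a::real_normed_vector"
  assumes "convex S"
    and der: "\<And>y. y \<in> S \<Longrightarrow> (f has_vector_derivative f' y) (at y within S)"
    and lip: "\<And>y. y \<in> S \<Longrightarrow> norm (f' y - f' x) \<le> B * \<bar>y - x\<bar>"
    and "x \<in> S" "x + s \<in> S" "x - s \<in> S" "B \<ge> 0"
  shows "norm ((1/2) *\<^sub>R (f (x + s) + f (x - s)) - f x) \<le> B * s\<^sup>2"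
proof -
  define r where "r y = f y - f x - (y - x) *\<^sub>R f' x" for y
  have "norm (r y) \<le> B * (y - x)\<^sup>2" if "y \<in> S" for y
    using taylor_first_order_remainder[OF \<open>convex S\<close> der lip \<open>x \<in> S\<close> that \<open>B \<ge> 0\<close>]
    by (simp add: r_def)
  from this[of "x + s"] this[of "x - s"]
  have "norm (r (x + s)) \<le> B * s\<^sup>2" "norm (r (x - s)) \<le> B * s\<^sup>2"
    using assms by simp_all
  moreover have "(1/2) *\<^sub>R (f (x + s) + f (x - s)) - f x = (1/2) *\<^sub>R (r (x + s) + r (x - s))"
    by (simp add: r_def algebra_simps flip: scaleR_add_left)
  ultimately show ?thesis
    using norm_triangle_ineq[of "r (x + s)" "r (x - s)"] by simp
qed

text \<open>With two base points \<open>p\<close> and \<open>q\<close> at which \<open>f\<close> has the same 2-jet, the stencil may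
  straddle the seam of a periodic function (\<open>p = a\<close>, \<open>q = b\<close>); interior points use \<open>p = q\<close>.\<close>

lemma central_difference_error:
  fixes f f' f'' :: "real \<Rightarrow> 'a::real_normed_vector"
  assumes "convex S"
    and der: "\<And>y. y \<in> S \<Longrightarrow> (f has_vector_derivative f' y) (at y within S)"
    and der2: "\<And>y. y \<in> S \<Longrightarrow> (f' has_vector_derivative f'' y) (at y within S)"
    and lip: "\<And>y z. y \<in> S \<Longrightarrow> z \<in> S \<Longrightarrow> norm (f'' y - f'' z) \<le> L * \<bar>y - z\<bar>"
    and "p \<in> S" "q \<in> S" "p + h \<in> S" "q - h \<in> S" "L \<ge> 0" "h \<ge> 0"
    and "f p = f q" "f' p = f' q" "f'' p = f'' q"
  shows "norm (f (p + h) - f (q - h) - (2 * h) *\<^sub>R f' p) \<le> 2 * L * h ^ 3"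
proof -
  define r where "r x0 y = f y - f x0 - (y - x0) *\<^sub>R f' x0 - ((y - x0)\<^sup>2 / 2) *\<^sub>R f'' x0" for x0 y
  have "norm (r x0 y) \<le> L * \<bar>y - x0\<bar> ^ 3" if "x0 \<in> S" "y \<in> S" for x0 y
    using taylor_second_order_remainder[OF \<open>convex S\<close> der der2 _ that \<open>L \<ge> 0\<close>] lip that(1)
    unfolding r_def by blast
  from this[of p "p + h"] this[of q "q - h"]
  have "norm (r p (p + h)) \<le> L * h ^ 3" "norm (r q (q - h)) \<le> L * h ^ 3"
    using assms by simp_all
  moreover have "f (p + h) - f (q - h) - (2 * h) *\<^sub>R f' p = r p (p + h) - r q (q - h)"
    using assms by (simp add: r_def algebra_simps flip: scaleR_add_left scaleR_diff_left)
  ultimately show ?thesis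
    using norm_triangle_ineq4[of "r p (p + h)" "r q (q - h)"] by simp
qed

lemma grid_point_bounds:
  assumes "a < b" "h = (b - a) / real M" "j < M"
  shows "0 < h" "a \<le> a + real j * h" "a + real j * h + h \<le> b"
proof -
  show "h > 0"
    using assms by auto
  moreover have "a + real M * h = b"
    using assms by auto
  moreover have "(real j + 1) * h \<le> real M * h"
    using \<open>h > 0\<close> \<open>j < M\<close> by (intro mult_right_mono) auto
  ultimately show "a \<le> a + real j * h" "a + real j * h + h \<le> b"
    by (auto simp: algebra_simps)
qed

text \<open>On the periodic grid \<open>x\<^sub>j = a + j h\<close>, \<open>j < M\<close>, the right neighbour of \<open>x\<^sub>M\<^sub>-\<^sub>1\<close> is
  \<open>x\<^sub>0 = a\<close>, which a periodic \<open>f\<close> cannot tell from \<open>b\<close>; likewise the left neighbour of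
  \<open>x\<^sub>0\<close> is \<open>b - h\<close>.\<close>

lemma periodic_grid_neighbours:
  assumes "a < b" "h = (b - a) / real M" "j < M" "f a = f b"
  shows "f (a + real ((j + 1) mod M) * h) = f (a + real j * h + h)"
    and "f (a + real ((j + M - 1) mod M) * h) = f ((if j = 0 then b else a + real j * h) - h)"
proof -
  have "M > 0" "a + real M * h = b"
    using assms by auto
  show "f (a + real ((j + 1) mod M) * h) = f (a + real j * h + h)"
  proof (cases "j + 1 = M")
    case True
    then have "a + real j * h + h = b"
      using \<open>a + real M * h = b\<close> by (simp add: algebra_simps flip: True)
    then show ?thesis
      using True \<open>f a = f b\<close> by simp
  qed (use \<open>j < M\<close> in \<open>simp add: algebra_simps\<close>)
  show "f (a + real ((j + M - 1) mod M) * h) = f ((if j = 0 then b else a + real j * h) - h)"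
  proof (cases "j = 0")
    case True
    then have "(j + M - 1) mod M = M - 1"
      using \<open>M > 0\<close> by simp
    then show ?thesis
      using True \<open>M > 0\<close> \<open>a + real M * h = b\<close> by (simp add: algebra_simps)
  next
    case False
    then have "(j + M - 1) mod M = j - 1"
      using \<open>j < M\<close> by (simp add: mod_if)
    then show ?thesis
      using False by (simp add: algebra_simps)
  qed
qed

definition periodic_central_difference :: "real \<Rightarrow> real \<Rightarrow> nat \<Rightarrow> (real \<Rightarrow> 'a::real_normed_vector) \<Rightarrow> nat \<Rightarrow> 'a" where
  "periodic_central_difference a h M f j =
     (1 / (2 * h)) *\<^sub>R (f (a + real ((j + 1) mod M) * h) - f (a + real ((j + M - 1) mod M) * h))"

lemma periodic_central_difference_error:
  fixes f f' f'' :: "real \<Rightarrow> 'a::real_normed_vector"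
  assumes "a < b" "h = (b - a) / real M" "j < M"
    and der: "\<And>y. y \<in> {a..b} \<Longrightarrow> (f has_vector_derivative f' y) (at y within {a..b})"
    and der2: "\<And>y. y \<in> {a..b} \<Longrightarrow> (f' has_vector_derivative f'' y) (at y within {a..b})"
    and lip: "\<And>y z. y \<in> {a..b} \<Longrightarrow> z \<in> {a..b} \<Longrightarrow> norm (f'' y - f'' z) \<le> L * \<bar>y - z\<bar>"
    and "L \<ge> 0" "f a = f b" "f' a = f' b" "f'' a = f'' b"
  shows "norm (periodic_central_difference a h M f j - f' (a + real j * h)) \<le> L * h\<^sup>2"
proof -
  define p where "p = a + real j * h"
  define q where "q = (if j = 0 then b else p)"
  have "h > 0"
    using assms by simp
  have p: "p \<in> {a..b}" "p + h \<in> {a..b}"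
    using grid_point_bounds[OF assms(1-3)] \<open>h > 0\<close> by (auto simp: p_def)
  have q: "q \<in> {a..b}" "q - h \<in> {a..b}"
    using p \<open>h > 0\<close> \<open>a < b\<close> by (auto simp: q_def p_def)
  have bound: "norm (f (p + h) - f (q - h) - (2 * h) *\<^sub>R f' p) \<le> 2 * L * h ^ 3"
    by (rule central_difference_error[OF convex_real_interval(5) der der2 lip p(1) q(1) p(2) q(2)])
       (use assms \<open>h > 0\<close> in \<open>auto simp: q_def p_def\<close>)
  have "periodic_central_difference a h M f j - f' p = (1 / (2 * h)) *\<^sub>R (f (p + h) - f (q - h) - (2 * h) *\<^sub>R f' p)"
    using \<open>h > 0\<close> periodic_grid_neighbours[OF assms(1-3) \<open>f a = f b\<close>]
    by (simp add: periodic_central_difference_def p_def q_def algebra_simps)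
  then have "norm (periodic_central_difference a h M f j - f' p) = norm (f (p + h) - f (q - h) - (2 * h) *\<^sub>R f' p) / (2 * h)"
    using \<open>h > 0\<close> by simp
  also have "\<dots> \<le> 2 * L * h ^ 3 / (2 * h)"
    using bound \<open>h > 0\<close> by (intro divide_right_mono) simp_all
  also have "\<dots> = L * h\<^sup>2"
    using \<open>h > 0\<close> by (simp add: power2_eq_square power3_eq_cube)
  finally show ?thesis
    unfolding p_def .
qed

section \<open>Pauli matrices and the Dirac operator\<close>

lemma sigma1_mult_vec_nth [simp]: "(sigma1 *v u) $ 1 = u $ 2" "(sigma1 *v u) $ 2 = u $ 1"
  by (simp_all add: sigma1_def matrix_vector_mult_def sum_2)

lemma sigma3_mult_vec_nth [simp]: "(sigma3 *v u) $ 1 = u $ 1" "(sigma3 *v u) $ 2 = - u $ 2"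
  by (simp_all add: sigma3_def matrix_vector_mult_def sum_2)

lemma mscale_mult_vec [simp]:
  "mscale c I2 *v u = c *s u" "mscale c sigma1 *v u = c *s (sigma1 *v u)"
  by (simp_all add: mscale_def I2_def sigma1_def mat_def matrix_vector_mult_def sum_2 vec_eq_iff forall_2)

lemma dirac_rhs_nth:
  "dirac_rhs \<epsilon> v w ux u $ 1 = of_real (1/\<epsilon>) * (- \<i> * ux $ 2 + u $ 1) + of_real v * u $ 1 - of_real w * u $ 2"
  "dirac_rhs \<epsilon> v w ux u $ 2 = of_real (1/\<epsilon>) * (- \<i> * ux $ 1 - u $ 2) + of_real v * u $ 2 - of_real w * u $ 1"
  by (simp_all add: dirac_rhs_def matrix_vector_mult_diff_rdistrib diff_divide_distrib add_divide_distrib)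

lemma dirac_rhs_diff:
  "dirac_rhs \<epsilon> v w (ux - ux') (u - u') = dirac_rhs \<epsilon> v w ux u - dirac_rhs \<epsilon> v w ux' u'"
  by (simp add: vec_eq_iff forall_2 dirac_rhs_nth algebra_simps)

lemma norm_vector_scalar_mult: "norm (c *s u) = cmod c * norm (u :: complex^'n)"
  by (simp add: norm_vec_def norm_mult L2_set_right_distrib)

lemma norm_sigma1_mult_vec [simp]: "norm (sigma1 *v u) = norm u"
  and norm_sigma3_mult_vec [simp]: "norm (sigma3 *v u) = norm u"
  by (simp_all add: norm_vec_def L2_set_def sum_2 add.commute)

lemma norm_dirac_rhs_le:
  assumes "\<epsilon> > 0"
  shows "norm (dirac_rhs \<epsilon> v w ux u) \<le> norm ux / \<epsilon> + (1/\<epsilon> + \<bar>v\<bar> + \<bar>w\<bar>) * norm u"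
proof -
  have "dirac_rhs \<epsilon> v w ux u
      = (1/\<epsilon>) *\<^sub>R ((- \<i>) *s (sigma1 *v ux)) + (1/\<epsilon>) *\<^sub>R (sigma3 *v u) + v *\<^sub>R u - w *\<^sub>R (sigma1 *v u)"
    by (simp add: vec_eq_iff forall_2 dirac_rhs_nth scaleR_conv_of_real[where 'a=complex] algebra_simps)
  also have "norm \<dots> \<le> norm ((1/\<epsilon>) *\<^sub>R ((- \<i>) *s (sigma1 *v ux))) + norm ((1/\<epsilon>) *\<^sub>R (sigma3 *v u))
      + norm (v *\<^sub>R u) + norm (w *\<^sub>R (sigma1 *v u))"
    by (smt (verit) norm_triangle_ineq norm_triangle_ineq4)
  also have "\<dots> = norm ux / \<epsilon> + (1/\<epsilon> + \<bar>v\<bar> + \<bar>w\<bar>) * norm u"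
    using assms by (simp add: norm_vector_scalar_mult algebra_simps)
  finally show ?thesis .
qed

lemma inner_sigma1_mult_vec_commute: "inner (sigma1 *v u) q = inner u (sigma1 *v q)"
  by (simp add: inner_vec_def sum_2 algebra_simps)

lemma inner_dirac_rhs_self:
  "inner ((- \<i>) *s dirac_rhs \<epsilon> v w (of_real c *s ux) u) u = - (c / \<epsilon>) * inner (sigma1 *v ux) u"
  by (simp add: inner_vec_def sum_2 inner_complex_def dirac_rhs_nth algebra_simps)

lemma continuous_on_vector_scalar_mult [continuous_intros]:
  fixes f :: "'a::topological_space \<Rightarrow> complex^'n"
  assumes "continuous_on S c" "continuous_on S f"
  shows "continuous_on S (\<lambda>y. c y *s f y)"
  unfolding vector_scalar_mult_def by (intro continuous_intros assms)

lemma continuous_on_matrix_vector_mult [continuous_intros]: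
  fixes f :: "'a::topological_space \<Rightarrow> complex^'n"
  assumes "continuous_on S f"
  shows "continuous_on S (\<lambda>y. A *v f y)"
  by (rule continuous_on_compose2[OF matrix_vector_mult_linear_continuous_on[of UNIV] assms subset_UNIV])

lemma continuous_on_dirac_rhs [continuous_intros]:
  assumes "continuous_on S v" "continuous_on S w" "continuous_on S ux" "continuous_on S u"
  shows "continuous_on S (\<lambda>y. dirac_rhs \<epsilon> (v y) (w y) (ux y) (u y))"
  unfolding dirac_rhs_def matrix_vector_mult_diff_rdistrib mscale_mult_vec
  by (intro continuous_intros assms)

section \<open>Stability of the Crank-Nicolson scheme\<close>

lemma sum_lessThan_rotate:
  fixes M :: nat
  assumes "M > 0"
  shows "(\<Sum>j<M. g ((j + 1) mod M)) = (\<Sum>j<M. g j)"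
proof -
  obtain m where M: "M = Suc m"
    using assms by (cases M) auto
  have "(\<Sum>j<Suc m. g ((j + 1) mod Suc m)) = (\<Sum>j<m. g (Suc j)) + g 0"
    by simp
  also have "\<dots> = (\<Sum>j<Suc m. g j)"
    by (metis add.commute sum.lessThan_Suc_shift)
  finally show ?thesis
    unfolding M .
qed

lemma pred_mod_succ_mod: "j < M \<Longrightarrow> ((j + 1) mod M + M - 1) mod (M::nat) = j"
  by (cases "j + 1 = M") (simp_all add: Suc_lessI)

lemma sum_inner_sigma1_central_difference:
  fixes M :: nat
  assumes "M > 0"
  shows "(\<Sum>j<M. inner (sigma1 *v (Q ((j + 1) mod M) - Q ((j + M - 1) mod M))) (Q j)) = 0"
proof -
  have "(\<Sum>j<M. inner (sigma1 *v Q ((j + M - 1) mod M)) (Q j))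
      = (\<Sum>j<M. inner (sigma1 *v Q (((j + 1) mod M + M - 1) mod M)) (Q ((j + 1) mod M)))"
    using sum_lessThan_rotate[OF assms, of "\<lambda>j. inner (sigma1 *v Q ((j + M - 1) mod M)) (Q j)"] by simp
  also have "\<dots> = (\<Sum>j<M. inner (sigma1 *v Q ((j + 1) mod M)) (Q j))"
    by (intro sum.cong refl) (metis lessThan_iff pred_mod_succ_mod inner_sigma1_mult_vec_commute inner_commute)
  finally show ?thesis
    by (simp add: matrix_vector_mult_diff_distrib inner_diff_left sum_subtractf)
qed

definition cnfd_residual ::
  "real \<Rightarrow> (real \<Rightarrow> real \<Rightarrow> real) \<Rightarrow> (real \<Rightarrow> real \<Rightarrow> real) \<Rightarrow> real \<Rightarrow> real \<Rightarrow> nat \<Rightarrow> real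
     \<Rightarrow> (nat \<Rightarrow> nat \<Rightarrow> complex^2) \<Rightarrow> nat \<Rightarrow> nat \<Rightarrow> complex^2" where
  "cnfd_residual \<epsilon> V A1 a h M \<tau> U n j =
     (let Q = (\<lambda>k. (1/2 :: complex) *s (U (Suc n) k + U n k));
          tm = real n * \<tau> + \<tau> / 2; xj = a + real j * h in
      \<i> *s (complex_of_real (1/\<tau>) *s (U (Suc n) j - U n j)) -
        dirac_rhs \<epsilon> (V tm xj) (A1 tm xj)
          (complex_of_real (1 / (2*h)) *s (Q ((j + 1) mod M) - Q ((j + M - 1) mod M))) (Q j))"

lemma cnfd_solutionD:
  assumes "cnfd_solution a b T \<epsilon> V A1 Phi0 M \<tau> P" "h = (b - a) / real M"
  shows cnfd_solution_initial: "j < M \<Longrightarrow> P 0 j = Phi0 (a + real j * h)"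
    and cnfd_solution_residual:
      "real (Suc n) * \<tau> \<le> T \<Longrightarrow> j < M \<Longrightarrow> cnfd_residual \<epsilon> V A1 a h M \<tau> P n j = 0"
  using assms by (auto simp: cnfd_solution_def cnfd_residual_def Let_def)

lemma cnfd_residual_diff:
  "cnfd_residual \<epsilon> V A1 a h M \<tau> (\<lambda>n j. U n j - W n j) n j
     = cnfd_residual \<epsilon> V A1 a h M \<tau> U n j - cnfd_residual \<epsilon> V A1 a h M \<tau> W n j"
  by (simp add: cnfd_residual_def Let_def vec_eq_iff forall_2 dirac_rhs_nth algebra_simps)

lemma cnfd_pointwise_energy:
  fixes e0 e1 ux r :: "complex^2"
  assumes "\<tau> > 0"
    and r: "r = \<i> *s (complex_of_real (1/\<tau>) *s (e1 - e0))
              - dirac_rhs \<epsilon> v w (complex_of_real c *s ux) ((1/2 :: complex) *s (e1 + e0))"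
  shows "(norm e1)\<^sup>2 - (norm e0)\<^sup>2
    \<le> - (2 * \<tau> * c / \<epsilon>) * inner (sigma1 *v ux) ((1/2 :: complex) *s (e1 + e0)) + \<tau> * norm r * (norm e1 + norm e0)"
proof -
  let ?Q = "(1/2 :: complex) *s (e1 + e0)"
  let ?R = "dirac_rhs \<epsilon> v w (complex_of_real c *s ux) ?Q"
  have step: "e1 - e0 = \<tau> *\<^sub>R ((- \<i>) *s ?R) + \<tau> *\<^sub>R ((- \<i>) *s r)"
    using \<open>\<tau> > 0\<close> unfolding r by (simp add: vec_eq_iff scaleR_conv_of_real[where 'a=complex] algebra_simps)
  have "e1 + e0 = 2 *\<^sub>R ?Q"
    by (simp add: vec_eq_iff scaleR_conv_of_real[where 'a=complex])
  then have Q: "inner x (e1 + e0) = 2 * inner x ?Q" for x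
    by (metis inner_scaleR_right)
  have "(norm e1)\<^sup>2 - (norm e0)\<^sup>2 = inner (e1 - e0) (e1 + e0)"
    by (simp add: power2_norm_eq_inner inner_commute algebra_simps)
  also have "\<dots> = \<tau> * inner ((- \<i>) *s ?R) (e1 + e0) + \<tau> * inner ((- \<i>) *s r) (e1 + e0)"
    unfolding step by (simp add: inner_diff_left)
  also have "inner ((- \<i>) *s ?R) (e1 + e0) = 2 * inner ((- \<i>) *s ?R) ?Q"
    by (rule Q)
  also have "inner ((- \<i>) *s ?R) ?Q = - (c / \<epsilon>) * inner (sigma1 *v ux) ?Q"
    by (rule inner_dirac_rhs_self)
  also have "inner ((- \<i>) *s r) (e1 + e0) \<le> norm r * (norm e1 + norm e0)"
    using norm_cauchy_schwarz[of "(- \<i>) *s r" "e1 + e0"] norm_triangle_ineq[of e1 e0]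
    by (simp add: norm_vector_scalar_mult) (meson mult_left_mono norm_ge_zero order_trans)
  finally show ?thesis
    using \<open>\<tau> > 0\<close> by (simp add: algebra_simps mult_left_mono)
qed

lemma le_add_of_square_diff_le:
  fixes x y d :: real
  assumes "0 \<le> x" "0 \<le> y" "0 \<le> d" "x\<^sup>2 - y\<^sup>2 \<le> d * (x + y)"
  shows "x \<le> y + d"
proof (cases "x + y = 0")
  case True
  then show ?thesis
    using assms by simp
next
  case False
  then have "x + y > 0"
    using assms by simp
  moreover have "(x - y) * (x + y) \<le> d * (x + y)"
    using assms(4) by (simp add: power2_eq_square algebra_simps)
  ultimately show ?thesis
    by simp
qed

lemma grid_l2_nonneg: "h \<ge> 0 \<Longrightarrow> grid_l2 M h e \<ge> 0"
  by (simp add: grid_l2_def sum_nonneg)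

lemma grid_l2_square: "h \<ge> 0 \<Longrightarrow> (grid_l2 M h e)\<^sup>2 = h * (\<Sum>j<M. (norm (e j))\<^sup>2)"
  by (simp add: grid_l2_def sum_nonneg)

lemma grid_l2_cauchy_schwarz:
  assumes "h \<ge> 0"
  shows "h * (\<Sum>j<M. norm (f j) * norm (g j)) \<le> grid_l2 M h f * grid_l2 M h g"
proof -
  have l2: "grid_l2 M h e = sqrt h * L2_set (\<lambda>j. norm (e j)) {..<M}" for e
    by (simp add: grid_l2_def L2_set_def real_sqrt_mult)
  have "(\<Sum>j<M. norm (f j) * norm (g j))
      \<le> L2_set (\<lambda>j. norm (f j)) {..<M} * L2_set (\<lambda>j. norm (g j)) {..<M}"
    using L2_set_mult_ineq[of "\<lambda>j. norm (f j)" "\<lambda>j. norm (g j)" "{..<M}"] by simp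
  then have "h * (\<Sum>j<M. norm (f j) * norm (g j))
      \<le> (sqrt h * sqrt h) * (L2_set (\<lambda>j. norm (f j)) {..<M} * L2_set (\<lambda>j. norm (g j)) {..<M})"
    using assms by (simp add: mult_left_mono)
  also have "\<dots> = grid_l2 M h f * grid_l2 M h g"
    by (simp only: l2 mult_ac)
  finally show ?thesis .
qed

lemma grid_l2_le:
  assumes "h \<ge> 0" "B \<ge> 0" "\<And>j. j < M \<Longrightarrow> norm (e j) \<le> B"
  shows "grid_l2 M h e \<le> sqrt (h * real M) * B"
proof -
  have "(\<Sum>j<M. (norm (e j))\<^sup>2) \<le> (\<Sum>j<M. B\<^sup>2)"
    using assms by (intro sum_mono power_mono) auto
  then have "h * (\<Sum>j<M. (norm (e j))\<^sup>2) \<le> h * real M * B\<^sup>2"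
    using mult_left_mono[OF _ \<open>h \<ge> 0\<close>] by (simp add: mult.assoc)
  then have "sqrt (h * (\<Sum>j<M. (norm (e j))\<^sup>2)) \<le> sqrt (h * real M * B\<^sup>2)"
    by (rule real_sqrt_le_mono)
  then show ?thesis
    using assms by (simp add: grid_l2_def real_sqrt_mult)
qed

lemma cnfd_l2_stability:
  assumes "M > 0" "h > 0" "\<tau> > 0"
  shows "grid_l2 M h (U (Suc n))
    \<le> grid_l2 M h (U n) + \<tau> * grid_l2 M h (cnfd_residual \<epsilon> V A1 a h M \<tau> U n)"
proof -
  let ?r = "cnfd_residual \<epsilon> V A1 a h M \<tau> U n"
  let ?Q = "\<lambda>k. (1/2 :: complex) *s (U (Suc n) k + U n k)"
  define B where "B j = inner (sigma1 *v (?Q ((j + 1) mod M) - ?Q ((j + M - 1) mod M))) (?Q j)" for j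
  define \<kappa> where "\<kappa> = 2 * \<tau> * (1 / (2 * h)) / \<epsilon>"
  have pointwise: "(norm (U (Suc n) j))\<^sup>2 - (norm (U n j))\<^sup>2
      \<le> - \<kappa> * B j + \<tau> * norm (?r j) * (norm (U (Suc n) j) + norm (U n j))" for j
    unfolding B_def \<kappa>_def
    by (rule cnfd_pointwise_energy[OF \<open>\<tau> > 0\<close>]) (simp add: cnfd_residual_def Let_def)
  have "(grid_l2 M h (U (Suc n)))\<^sup>2 - (grid_l2 M h (U n))\<^sup>2
      = h * (\<Sum>j<M. (norm (U (Suc n) j))\<^sup>2 - (norm (U n j))\<^sup>2)"
    using assms by (simp add: grid_l2_square sum_subtractf right_diff_distrib)
  also have "\<dots> \<le> h * (\<Sum>j<M. - \<kappa> * B j + \<tau> * norm (?r j) * (norm (U (Suc n) j) + norm (U n j)))"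
    using assms pointwise by (intro mult_left_mono sum_mono) auto
  also have "\<dots> = - \<kappa> * h * (\<Sum>j<M. B j) + \<tau> * (h * (\<Sum>j<M. norm (?r j) * norm (U (Suc n) j))
      + h * (\<Sum>j<M. norm (?r j) * norm (U n j)))"
    by (simp add: sum.distrib sum_subtractf sum_negf sum_distrib_left algebra_simps)
  also have "(\<Sum>j<M. B j) = 0"
    unfolding B_def by (rule sum_inner_sigma1_central_difference[OF \<open>M > 0\<close>])
  also have "h * (\<Sum>j<M. norm (?r j) * norm (U (Suc n) j)) \<le> grid_l2 M h ?r * grid_l2 M h (U (Suc n))"
    using assms by (intro grid_l2_cauchy_schwarz) auto
  also have "h * (\<Sum>j<M. norm (?r j) * norm (U n j)) \<le> grid_l2 M h ?r * grid_l2 M h (U n)"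
    using assms by (intro grid_l2_cauchy_schwarz) auto
  finally show ?thesis
    using assms grid_l2_nonneg[of h M ?r]
    by (intro le_add_of_square_diff_le grid_l2_nonneg) (auto simp: algebra_simps)
qed

section \<open>Consistency and convergence\<close>

lemma continuous_on_slice:
  assumes "continuous_on (A \<times> B) (\<lambda>(t, x). f t x)" "t \<in> A"
  shows "continuous_on B (f t)"
proof -
  have "continuous_on B (\<lambda>x. (t, x))"
    by (intro continuous_intros)
  then have "continuous_on B (\<lambda>x. (\<lambda>(t, x). f t x) (t, x))"
    using assms by (intro continuous_on_compose2[OF assms(1)]) auto
  then show ?thesis
    by simp
qed

lemma continuous_on_Times_bounded:
  fixes f :: "'a::topological_space \<Rightarrow> 'b::topological_space \<Rightarrow> 'c::real_normed_vector"
  assumes "compact A" "compact B" "continuous_on (A \<times> B) (\<lambda>(t, x). f t x)"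
  obtains C where "\<And>t x. t \<in> A \<Longrightarrow> x \<in> B \<Longrightarrow> norm (f t x) \<le> C"
proof -
  have "compact ((\<lambda>(t, x). f t x) ` (A \<times> B))"
    using assms by (intro compact_continuous_image compact_Times)
  then obtain C where "\<forall>y \<in> (\<lambda>(t, x). f t x) ` (A \<times> B). norm y \<le> C"
    by (meson compact_imp_bounded bounded_iff)
  then show ?thesis
    by (intro that[of C]) force
qed

lemma cnfd_residual_of_samples:
  fixes u :: "real \<Rightarrow> real \<Rightarrow> complex^2"
  shows "cnfd_residual \<epsilon> V A1 a h M \<tau> (\<lambda>n j. u (real n * \<tau>) (a + real j * h)) n j
    = \<i> *s (complex_of_real (1/\<tau>) *s (u (real (Suc n) * \<tau>) (a + real j * h) - u (real n * \<tau>) (a + real j * h)))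
      - dirac_rhs \<epsilon> (V (real n * \<tau> + \<tau> / 2) (a + real j * h)) (A1 (real n * \<tau> + \<tau> / 2) (a + real j * h))
          ((1/2) *\<^sub>R (periodic_central_difference a h M (u (real (Suc n) * \<tau>)) j
                      + periodic_central_difference a h M (u (real n * \<tau>)) j))
          ((1/2) *\<^sub>R (u (real (Suc n) * \<tau>) (a + real j * h) + u (real n * \<tau>) (a + real j * h)))"
proof -
  have "(1/2 :: complex) *s (u (real (Suc n) * \<tau>) x + u (real n * \<tau>) x)
      = (1/2) *\<^sub>R (u (real (Suc n) * \<tau>) x + u (real n * \<tau>) x)" for x
    by (simp add: vec_eq_iff scaleR_conv_of_real[where 'a=complex])
  moreover have "complex_of_real (1 / (2 * h)) *s ((1/2) *\<^sub>R (u (real (Suc n) * \<tau>) x + u (real n * \<tau>) x)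
        - (1/2) *\<^sub>R (u (real (Suc n) * \<tau>) y + u (real n * \<tau>) y))
      = (1/2) *\<^sub>R ((1 / (2 * h)) *\<^sub>R (u (real (Suc n) * \<tau>) x - u (real (Suc n) * \<tau>) y)
                  + (1 / (2 * h)) *\<^sub>R (u (real n * \<tau>) x - u (real n * \<tau>) y))" for x y
    by (simp add: vec_eq_iff scaleR_conv_of_real[where 'a=complex] algebra_simps)
  ultimately show ?thesis
    unfolding cnfd_residual_def Let_def periodic_central_difference_def by simp
qed

lemma norm_dirac_residual_le:
  assumes "\<epsilon> > 0" "\<tau> > 0" and eq: "\<i> *s u' = dirac_rhs \<epsilon> v w ux u"
  shows "norm (\<i> *s (complex_of_real (1/\<tau>) *s (U1 - U0)) - dirac_rhs \<epsilon> v w DX Q)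
    \<le> norm (U1 - U0 - \<tau> *\<^sub>R u') / \<tau> + norm (DX - ux) / \<epsilon> + (1/\<epsilon> + \<bar>v\<bar> + \<bar>w\<bar>) * norm (Q - u)"
proof -
  have "\<i> *s (complex_of_real (1/\<tau>) *s (U1 - U0)) - dirac_rhs \<epsilon> v w DX Q
      = \<i> *s ((1/\<tau>) *\<^sub>R (U1 - U0 - \<tau> *\<^sub>R u')) - dirac_rhs \<epsilon> v w (DX - ux) (Q - u)"
    using \<open>\<tau> > 0\<close> unfolding dirac_rhs_diff eq[symmetric]
    by (simp add: vec_eq_iff scaleR_conv_of_real[where 'a=complex] field_simps)
  also have "norm \<dots> \<le> norm (\<i> *s ((1/\<tau>) *\<^sub>R (U1 - U0 - \<tau> *\<^sub>R u'))) + norm (dirac_rhs \<epsilon> v w (DX - ux) (Q - u))"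
    by (rule norm_triangle_ineq4)
  also have "\<dots> \<le> norm (U1 - U0 - \<tau> *\<^sub>R u') / \<tau> + (norm (DX - ux) / \<epsilon> + (1/\<epsilon> + \<bar>v\<bar> + \<bar>w\<bar>) * norm (Q - u))"
    using assms norm_dirac_rhs_le[OF \<open>\<epsilon> > 0\<close>, of v w "DX - ux" "Q - u"]
    by (intro add_mono) (simp_all add: norm_vector_scalar_mult)
  finally show ?thesis
    by simp
qed

lemma cnfd_consistency_constant:
  fixes \<epsilon> \<tau> h K Vm Am :: real
  assumes "0 < \<epsilon>" "\<epsilon> \<le> 1" "0 < \<tau>" "0 \<le> K" "0 \<le> Vm" "0 \<le> Am"
  shows "2 * (K / \<epsilon> ^ 3) * (\<tau> / 2) ^ 3 / \<tau> + (K * h\<^sup>2 + K / \<epsilon>\<^sup>2 * (\<tau> / 2)\<^sup>2) / \<epsilon>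
           + (1 / \<epsilon> + Vm + Am) * (K / \<epsilon>\<^sup>2 * (\<tau> / 2)\<^sup>2)
         \<le> K * (1 + Vm + Am) * (h\<^sup>2 / \<epsilon> + \<tau>\<^sup>2 / \<epsilon> ^ 3)"
proof -
  have "\<epsilon> ^ 3 \<le> \<epsilon>\<^sup>2"
    using assms by (simp add: power_decreasing)
  then have "(Vm + Am) * (K * \<tau>\<^sup>2) / \<epsilon>\<^sup>2 \<le> (Vm + Am) * (K * \<tau>\<^sup>2) / \<epsilon> ^ 3"
    using assms by (intro divide_left_mono) auto
  moreover have "0 \<le> (Vm + Am) * (K * h\<^sup>2 / \<epsilon>)" "0 \<le> K * \<tau>\<^sup>2 / \<epsilon> ^ 3"
    and "0 \<le> (Vm + Am) * (K * \<tau>\<^sup>2) / \<epsilon>\<^sup>2"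
    using assms by simp_all
  moreover have "\<And>A r s X Y :: real. X \<le> Y \<Longrightarrow> 0 \<le> X \<Longrightarrow> 0 \<le> r \<Longrightarrow> 0 \<le> s \<Longrightarrow>
      A + 3 / 4 * s + X / 4 \<le> A + r + s + Y"
    by linarith
  moreover have "2 * (K / \<epsilon> ^ 3) * (\<tau> / 2) ^ 3 / \<tau> + (K * h\<^sup>2 + K / \<epsilon>\<^sup>2 * (\<tau> / 2)\<^sup>2) / \<epsilon>
           + (1 / \<epsilon> + Vm + Am) * (K / \<epsilon>\<^sup>2 * (\<tau> / 2)\<^sup>2)
      = K * h\<^sup>2 / \<epsilon> + 3 / 4 * (K * \<tau>\<^sup>2 / \<epsilon> ^ 3) + (Vm + Am) * (K * \<tau>\<^sup>2) / \<epsilon>\<^sup>2 / 4"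
    using assms by (simp add: field_simps power2_eq_square power3_eq_cube)
  moreover have "K * (1 + Vm + Am) * (h\<^sup>2 / \<epsilon> + \<tau>\<^sup>2 / \<epsilon> ^ 3)
      = K * h\<^sup>2 / \<epsilon> + (Vm + Am) * (K * h\<^sup>2 / \<epsilon>) + K * \<tau>\<^sup>2 / \<epsilon> ^ 3 + (Vm + Am) * (K * \<tau>\<^sup>2) / \<epsilon> ^ 3"
    by (simp add: algebra_simps add_divide_distrib)
  ultimately show ?thesis
    by metis
qed

lemma grid_l2_cong: "(\<And>j. j < M \<Longrightarrow> f j = g j) \<Longrightarrow> grid_l2 M h f = grid_l2 M h g"
  unfolding grid_l2_def by (metis (no_types, lifting) lessThan_iff sum.cong)

lemma linear_growth_bound:
  fixes S :: "nat \<Rightarrow> real"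
  assumes "S 0 \<le> 0" "0 \<le> \<tau>"
    and step: "\<And>k. real (Suc k) * \<tau> \<le> T \<Longrightarrow> S (Suc k) \<le> S k + \<tau> * \<beta>"
  shows "real n * \<tau> \<le> T \<Longrightarrow> S n \<le> real n * \<tau> * \<beta>"
proof (induction n)
  case 0
  then show ?case
    using assms(1) by simp
next
  case (Suc k)
  have "real k * \<tau> \<le> real (Suc k) * \<tau>"
    using \<open>0 \<le> \<tau>\<close> by (intro mult_right_mono) auto
  then have "S k \<le> real k * \<tau> * \<beta>"
    using Suc by linarith
  then show ?case
    using step[OF Suc.prems] by (simp add: algebra_simps)
qed

context
  fixes a b T K \<epsilon> :: real and V A1 :: "real \<Rightarrow> real \<Rightarrow> real"
    and D :: "nat \<Rightarrow> nat \<Rightarrow> real \<Rightarrow> real \<Rightarrow> complex^2"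
  assumes sol: "dirac_solution a b T K \<epsilon> V A1 D"
begin

lemma dirac_solutionD:
  shows dirac_solution_time_derivative: "\<And>r s t x. r + s \<le> 1 \<Longrightarrow> t \<in> {0..T} \<Longrightarrow> x \<in> {a..b} \<Longrightarrow>
        ((\<lambda>t. D r s t x) has_vector_derivative D (Suc r) s t x) (at t within {0..T})"
    and dirac_solution_space_derivative: "\<And>r s t x. r + s \<le> 1 \<Longrightarrow> t \<in> {0..T} \<Longrightarrow> x \<in> {a..b} \<Longrightarrow>
        (D r s t has_vector_derivative D r (Suc s) t x) (at x within {a..b})"
    and dirac_solution_continuous: "\<And>r s. r + s \<le> 2 \<Longrightarrow>
        continuous_on ({0..T} \<times> {a..b}) (\<lambda>(t, x). D r s t x)"
    and dirac_solution_periodic: "\<And>r s t. r + s \<le> 2 \<Longrightarrow> t \<in> {0..T} \<Longrightarrow> D r s t a = D r s t b"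
    and dirac_solution_bound: "\<And>r s t x. r + s \<le> 2 \<Longrightarrow> t \<in> {0..T} \<Longrightarrow> x \<in> {a..b} \<Longrightarrow>
        norm (D r s t x) \<le> K / \<epsilon> ^ r"
    and dirac_solution_time_lipschitz: "\<And>r s t t' x. r + s = 2 \<Longrightarrow> t \<in> {0..T} \<Longrightarrow> t' \<in> {0..T} \<Longrightarrow>
        x \<in> {a..b} \<Longrightarrow> norm (D r s t x - D r s t' x) \<le> K / \<epsilon> ^ Suc r * \<bar>t - t'\<bar>"
    and dirac_solution_space_lipschitz: "\<And>r s t x x'. r + s = 2 \<Longrightarrow> t \<in> {0..T} \<Longrightarrow> x \<in> {a..b} \<Longrightarrow>
        x' \<in> {a..b} \<Longrightarrow> norm (D r s t x - D r s t x') \<le> K / \<epsilon> ^ r * \<bar>x - x'\<bar>"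
    and dirac_solution_equation: "\<And>t x. t \<in> {0..T} \<Longrightarrow> x \<in> {a<..<b} \<Longrightarrow>
        \<i> *s D 1 0 t x = dirac_rhs \<epsilon> (V t x) (A1 t x) (D 0 1 t x) (D 0 0 t x)"
  using sol unfolding dirac_solution_def by simp_all

lemma dirac_solution_const_nonneg: "t \<in> {0..T} \<Longrightarrow> x \<in> {a..b} \<Longrightarrow> 0 \<le> K"
  using order_trans[OF norm_ge_zero dirac_solution_bound[of 0 0 t x]] by simp

text \<open>The equation is only assumed in the open interval; continuity extends it to the
  periodic grid point \<open>x\<^sub>0 = a\<close>.\<close>

lemma dirac_solution_equation_closed:
  assumes "a < b" "t \<in> {0..T}" "x \<in> {a..b}"
    and cV: "continuous_on ({0..T} \<times> {a..b}) (\<lambda>(t, x). V t x)"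
    and cA: "continuous_on ({0..T} \<times> {a..b}) (\<lambda>(t, x). A1 t x)"
  shows "\<i> *s D 1 0 t x = dirac_rhs \<epsilon> (V t x) (A1 t x) (D 0 1 t x) (D 0 0 t x)"
proof -
  let ?F = "\<lambda>y. \<i> *s D 1 0 t y - dirac_rhs \<epsilon> (V t y) (A1 t y) (D 0 1 t y) (D 0 0 t y)"
  have D: "continuous_on {a..b} (D r s t)" if "r + s \<le> 2" for r s
    by (rule continuous_on_slice[OF dirac_solution_continuous[OF that] \<open>t \<in> {0..T}\<close>])
  have cont: "continuous_on {a..b} ?F"
    apply (intro continuous_on_diff continuous_on_vector_scalar_mult continuous_on_dirac_rhs continuous_on_const
        continuous_on_slice[OF cV \<open>t \<in> {0..T}\<close>] continuous_on_slice[OF cA \<open>t \<in> {0..T}\<close>])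
    using D by auto
  have closure: "closure {a<..<b} = {a..b}"
    using \<open>a < b\<close> by simp
  have "?F y = 0" if "y \<in> {a<..<b}" for y
    using dirac_solution_equation[OF \<open>t \<in> {0..T}\<close> that] by simp
  then have "?F x = 0"
    using continuous_constant_on_closure[where S = "{a<..<b}" and f = ?F] cont \<open>x \<in> {a..b}\<close>
    unfolding closure by blast
  then show ?thesis
    by simp
qed

lemma dirac_solution_time_derivative_lipschitz:
  assumes "s \<le> 1" "t \<in> {0..T}" "t' \<in> {0..T}" "x \<in> {a..b}"
  shows "norm (D 1 s t x - D 1 s t' x) \<le> K / \<epsilon>\<^sup>2 * \<bar>t - t'\<bar>"
proof (cases "s = 0")
  case True
  show ?thesis
    unfolding True
    by (rule lipschitz_of_vector_derivative_bound[OF convex_real_interval(5) _ _ assms(2,3)])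
       (use dirac_solution_time_derivative[of 1 0 _ x] dirac_solution_bound[of 2 0 _ x] assms
          in \<open>auto simp: numeral_2_eq_2\<close>)
next
  case False
  then have "s = 1"
    using assms(1) by simp
  then show ?thesis
    using dirac_solution_time_lipschitz[of 1 1 t t' x] assms by (simp add: numeral_2_eq_2)
qed

lemma dirac_solution_time_central_difference:
  assumes "\<epsilon> > 0" "x \<in> {a..b}" "tm \<in> {0..T}" "tm + \<sigma> \<in> {0..T}" "tm - \<sigma> \<in> {0..T}" "\<sigma> \<ge> 0"
  shows "norm (D 0 0 (tm + \<sigma>) x - D 0 0 (tm - \<sigma>) x - (2 * \<sigma>) *\<^sub>R D 1 0 tm x) \<le> 2 * (K / \<epsilon> ^ 3) * \<sigma> ^ 3"
proof (rule central_difference_error[OF convex_real_interval(5)])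
  show "((\<lambda>t. D 0 0 t x) has_vector_derivative D 1 0 t x) (at t within {0..T})"
    and "((\<lambda>t. D 1 0 t x) has_vector_derivative D 2 0 t x) (at t within {0..T})" if "t \<in> {0..T}" for t
    using dirac_solution_time_derivative[of 0 0 t x] dirac_solution_time_derivative[of 1 0 t x] that assms
    by (simp_all add: numeral_2_eq_2)
  show "norm (D 2 0 t x - D 2 0 t' x) \<le> K / \<epsilon> ^ 3 * \<bar>t - t'\<bar>" if "t \<in> {0..T}" "t' \<in> {0..T}" for t t'
    using dirac_solution_time_lipschitz[of 2 0 t t' x] that assms by simp
  show "0 \<le> K / \<epsilon> ^ 3"
    using dirac_solution_const_nonneg[of tm x] assms by simp
qed (use assms in auto)

lemma dirac_solution_time_average:
  assumes "s \<le> 1" "x \<in> {a..b}" "tm \<in> {0..T}" "tm + \<sigma> \<in> {0..T}" "tm - \<sigma> \<in> {0..T}"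
  shows "norm ((1/2) *\<^sub>R (D 0 s (tm + \<sigma>) x + D 0 s (tm - \<sigma>) x) - D 0 s tm x) \<le> K / \<epsilon>\<^sup>2 * \<sigma>\<^sup>2"
proof (rule midpoint_average_error[OF convex_real_interval(5)])
  show "((\<lambda>t. D 0 s t x) has_vector_derivative D 1 s t x) (at t within {0..T})" if "t \<in> {0..T}" for t
    using dirac_solution_time_derivative[of 0 s t x] that assms by simp
  show "norm (D 1 s t x - D 1 s tm x) \<le> K / \<epsilon>\<^sup>2 * \<bar>t - tm\<bar>" if "t \<in> {0..T}" for t
    using dirac_solution_time_derivative_lipschitz that assms by simp
  show "0 \<le> K / \<epsilon>\<^sup>2"
    using dirac_solution_const_nonneg[of tm x] assms by simp
qed (use assms in auto)

lemma dirac_solution_grid_difference: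
  assumes "a < b" "h = (b - a) / real M" "j < M" "t \<in> {0..T}"
  shows "norm (periodic_central_difference a h M (D 0 0 t) j - D 0 1 t (a + real j * h)) \<le> K * h\<^sup>2"
proof (rule periodic_central_difference_error[OF assms(1-3)])
  show "(D 0 0 t has_vector_derivative D 0 1 t y) (at y within {a..b})"
    and "(D 0 1 t has_vector_derivative D 0 2 t y) (at y within {a..b})" if "y \<in> {a..b}" for y
    using dirac_solution_space_derivative[of 0 0 t y] dirac_solution_space_derivative[of 0 1 t y] that assms
    by (simp_all add: numeral_2_eq_2)
  show "norm (D 0 2 t y - D 0 2 t z) \<le> K * \<bar>y - z\<bar>" if "y \<in> {a..b}" "z \<in> {a..b}" for y z
    using dirac_solution_space_lipschitz[of 0 2 t y z] that assms by simp
  show "0 \<le> K"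
    using dirac_solution_const_nonneg[of t a] assms by simp
qed (use dirac_solution_periodic assms in auto)

lemma dirac_solution_averaged_grid_difference:
  assumes "a < b" "h = (b - a) / real M" "j < M" "tm \<in> {0..T}" "tm + \<sigma> \<in> {0..T}" "tm - \<sigma> \<in> {0..T}"
  shows "norm ((1/2) *\<^sub>R (periodic_central_difference a h M (D 0 0 (tm + \<sigma>)) j
                        + periodic_central_difference a h M (D 0 0 (tm - \<sigma>)) j)
               - D 0 1 tm (a + real j * h))
         \<le> K * h\<^sup>2 + K / \<epsilon>\<^sup>2 * \<sigma>\<^sup>2"
proof -
  let ?x = "a + real j * h"
  have "?x \<in> {a..b}"
    using grid_point_bounds[OF assms(1-3)] by auto
  have "norm ((1/2) *\<^sub>R (periodic_central_difference a h M (D 0 0 (tm + \<sigma>)) j - D 0 1 (tm + \<sigma>) ?x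
                        + (periodic_central_difference a h M (D 0 0 (tm - \<sigma>)) j - D 0 1 (tm - \<sigma>) ?x)))
      \<le> K * h\<^sup>2"
    using dirac_solution_grid_difference[OF assms(1-3,5)] dirac_solution_grid_difference[OF assms(1-3,6)]
      norm_triangle_ineq[of "periodic_central_difference a h M (D 0 0 (tm + \<sigma>)) j - D 0 1 (tm + \<sigma>) ?x"
        "periodic_central_difference a h M (D 0 0 (tm - \<sigma>)) j - D 0 1 (tm - \<sigma>) ?x"]
    by simp
  moreover have "norm ((1/2) *\<^sub>R (D 0 1 (tm + \<sigma>) ?x + D 0 1 (tm - \<sigma>) ?x) - D 0 1 tm ?x) \<le> K / \<epsilon>\<^sup>2 * \<sigma>\<^sup>2"
    using dirac_solution_time_average[OF _ \<open>?x \<in> {a..b}\<close> assms(4-6)] by simp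
  moreover have "(1/2) *\<^sub>R (periodic_central_difference a h M (D 0 0 (tm + \<sigma>)) j
                        + periodic_central_difference a h M (D 0 0 (tm - \<sigma>)) j) - D 0 1 tm ?x
      = (1/2) *\<^sub>R (periodic_central_difference a h M (D 0 0 (tm + \<sigma>)) j - D 0 1 (tm + \<sigma>) ?x
                        + (periodic_central_difference a h M (D 0 0 (tm - \<sigma>)) j - D 0 1 (tm - \<sigma>) ?x))
        + ((1/2) *\<^sub>R (D 0 1 (tm + \<sigma>) ?x + D 0 1 (tm - \<sigma>) ?x) - D 0 1 tm ?x)"
    by (simp add: algebra_simps)
  ultimately show ?thesis
    by (metis (no_types, lifting) add_mono norm_triangle_le)
qed

lemma dirac_solution_cnfd_residual:
  assumes "a < b" "0 < \<epsilon>" "\<epsilon> \<le> 1" "h = (b - a) / real M" "\<tau> > 0"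
    and "real (Suc n) * \<tau> \<le> T" "j < M"
    and cV: "continuous_on ({0..T} \<times> {a..b}) (\<lambda>(t, x). V t x)"
    and cA: "continuous_on ({0..T} \<times> {a..b}) (\<lambda>(t, x). A1 t x)"
    and Vm: "\<bar>V (real n * \<tau> + \<tau> / 2) (a + real j * h)\<bar> \<le> Vm"
    and Am: "\<bar>A1 (real n * \<tau> + \<tau> / 2) (a + real j * h)\<bar> \<le> Am"
  shows "norm (cnfd_residual \<epsilon> V A1 a h M \<tau> (\<lambda>n j. D 0 0 (real n * \<tau>) (a + real j * h)) n j)
           \<le> K * (1 + Vm + Am) * (h\<^sup>2 / \<epsilon> + \<tau>\<^sup>2 / \<epsilon> ^ 3)"
proof -
  define \<sigma> where "\<sigma> = \<tau> / 2"
  define tm where "tm = real n * \<tau> + \<tau> / 2"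
  define x where "x k = a + real k * h" for k
  have t: "tm \<in> {0..T}" "tm + \<sigma> \<in> {0..T}" "tm - \<sigma> \<in> {0..T}"
    using assms by (auto simp: tm_def \<sigma>_def algebra_simps)
  have tn: "real (Suc n) * \<tau> = tm + \<sigma>" "real n * \<tau> = tm - \<sigma>"
    by (simp_all add: tm_def \<sigma>_def algebra_simps)
  have xj: "x j \<in> {a..b}"
    using grid_point_bounds[OF assms(1,4,7)] by (auto simp: x_def)
  have "0 \<le> K" "0 \<le> Vm" "0 \<le> Am"
    using dirac_solution_const_nonneg[OF t(1) xj] Vm Am by auto
  let ?U = "\<lambda>t k. D 0 0 t (x k)"
  let ?Q = "\<lambda>k. (1/2) *\<^sub>R (?U (tm + \<sigma>) k + ?U (tm - \<sigma>) k)"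
  let ?DX = "(1/2) *\<^sub>R (periodic_central_difference a h M (D 0 0 (tm + \<sigma>)) j
                        + periodic_central_difference a h M (D 0 0 (tm - \<sigma>)) j)"
  have "tm - \<sigma> + \<tau> / 2 = tm"
    by (simp add: tm_def \<sigma>_def)
  then have "norm (cnfd_residual \<epsilon> V A1 a h M \<tau> (\<lambda>n j. D 0 0 (real n * \<tau>) (a + real j * h)) n j)
      = norm (\<i> *s (complex_of_real (1/\<tau>) *s (?U (tm + \<sigma>) j - ?U (tm - \<sigma>) j))
        - dirac_rhs \<epsilon> (V tm (x j)) (A1 tm (x j)) ?DX (?Q j))"
    unfolding cnfd_residual_of_samples unfolding tn x_def[symmetric] by simp
  also have "\<dots> \<le> norm (?U (tm + \<sigma>) j - ?U (tm - \<sigma>) j - \<tau> *\<^sub>R D 1 0 tm (x j)) / \<tau>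
      + norm (?DX - D 0 1 tm (x j)) / \<epsilon>
      + (1/\<epsilon> + \<bar>V tm (x j)\<bar> + \<bar>A1 tm (x j)\<bar>) * norm (?Q j - D 0 0 tm (x j))"
    by (rule norm_dirac_residual_le[OF \<open>\<epsilon> > 0\<close> \<open>\<tau> > 0\<close>
          dirac_solution_equation_closed[OF \<open>a < b\<close> t(1) xj cV cA]])
  also have "\<dots> \<le> norm (?U (tm + \<sigma>) j - ?U (tm - \<sigma>) j - \<tau> *\<^sub>R D 1 0 tm (x j)) / \<tau>
      + norm (?DX - D 0 1 tm (x j)) / \<epsilon> + (1/\<epsilon> + Vm + Am) * norm (?Q j - D 0 0 tm (x j))"
    using Vm Am by (simp add: tm_def x_def mult_right_mono)
  also have "\<dots> \<le> 2 * (K / \<epsilon> ^ 3) * \<sigma> ^ 3 / \<tau> + (K * h\<^sup>2 + K / \<epsilon>\<^sup>2 * \<sigma>\<^sup>2) / \<epsilon>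
      + (1 / \<epsilon> + Vm + Am) * (K / \<epsilon>\<^sup>2 * \<sigma>\<^sup>2)"
  proof (intro add_mono mult_left_mono divide_right_mono)
    show "norm (?U (tm + \<sigma>) j - ?U (tm - \<sigma>) j - \<tau> *\<^sub>R D 1 0 tm (x j)) \<le> 2 * (K / \<epsilon> ^ 3) * \<sigma> ^ 3"
      using dirac_solution_time_central_difference[OF \<open>\<epsilon> > 0\<close> xj t] \<open>\<tau> > 0\<close> by (simp add: \<sigma>_def)
    show "norm (?Q j - D 0 0 tm (x j)) \<le> K / \<epsilon>\<^sup>2 * \<sigma>\<^sup>2"
      using dirac_solution_time_average[OF _ xj t] by simp
    show "norm (?DX - D 0 1 tm (x j)) \<le> K * h\<^sup>2 + K / \<epsilon>\<^sup>2 * \<sigma>\<^sup>2"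
      using dirac_solution_averaged_grid_difference[OF assms(1,4,7) t] by (simp add: x_def)
  qed (use assms \<open>0 \<le> Vm\<close> \<open>0 \<le> Am\<close> in auto)
  also have "\<dots> \<le> K * (1 + Vm + Am) * (h\<^sup>2 / \<epsilon> + \<tau>\<^sup>2 / \<epsilon> ^ 3)"
    unfolding \<sigma>_def using assms \<open>0 \<le> K\<close> \<open>0 \<le> Vm\<close> \<open>0 \<le> Am\<close> by (intro cnfd_consistency_constant)
  finally show ?thesis .
qed

lemma dirac_solution_cnfd_error_step:
  assumes "a < b" "0 < \<epsilon>" "\<epsilon> \<le> 1" "M > 0" "h = (b - a) / real M" "\<tau> > 0"
    and cV: "continuous_on ({0..T} \<times> {a..b}) (\<lambda>(t, x). V t x)"
    and cA: "continuous_on ({0..T} \<times> {a..b}) (\<lambda>(t, x). A1 t x)"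
    and Vm: "\<And>t x. t \<in> {0..T} \<Longrightarrow> x \<in> {a..b} \<Longrightarrow> \<bar>V t x\<bar> \<le> Vm"
    and Am: "\<And>t x. t \<in> {0..T} \<Longrightarrow> x \<in> {a..b} \<Longrightarrow> \<bar>A1 t x\<bar> \<le> Am"
    and cn: "cnfd_solution a b T \<epsilon> V A1 (D 0 0 0) M \<tau> P"
    and k: "real (Suc k) * \<tau> \<le> T"
  shows "grid_l2 M h (\<lambda>j. D 0 0 (real (Suc k) * \<tau>) (a + real j * h) - P (Suc k) j)
    \<le> grid_l2 M h (\<lambda>j. D 0 0 (real k * \<tau>) (a + real j * h) - P k j)
      + \<tau> * (sqrt (b - a) * (K * (1 + Vm + Am) * (h\<^sup>2 / \<epsilon> + \<tau>\<^sup>2 / \<epsilon> ^ 3)))"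
proof -
  define u where "u k j = D 0 0 (real k * \<tau>) (a + real j * h)" for k j
  define e where "e k = (\<lambda>j. u k j - P k j)" for k
  have "h > 0" "h * real M = b - a"
    using assms by simp_all
  have grid: "a + real j * h \<in> {a..b}" if "j < M" for j
    using grid_point_bounds[OF \<open>a < b\<close> \<open>h = (b - a) / real M\<close> that] by auto
  have t: "real k * \<tau> + \<tau> / 2 \<in> {0..T}"
    using k \<open>\<tau> > 0\<close> by (simp add: algebra_simps)
  then have "0 \<le> K" "0 \<le> Vm" "0 \<le> Am"
    using dirac_solution_const_nonneg[OF t, of a] Vm[OF t, of a] Am[OF t, of a] \<open>a < b\<close> by auto
  then have bound_nonneg: "0 \<le> K * (1 + Vm + Am) * (h\<^sup>2 / \<epsilon> + \<tau>\<^sup>2 / \<epsilon> ^ 3)"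
    using \<open>\<epsilon> > 0\<close> by simp
  have "cnfd_residual \<epsilon> V A1 a h M \<tau> e k j = cnfd_residual \<epsilon> V A1 a h M \<tau> u k j" if "j < M" for j
    using cnfd_solution_residual[OF cn \<open>h = (b - a) / real M\<close> k that]
    unfolding e_def by (simp add: cnfd_residual_diff)
  then have "grid_l2 M h (cnfd_residual \<epsilon> V A1 a h M \<tau> e k) = grid_l2 M h (cnfd_residual \<epsilon> V A1 a h M \<tau> u k)"
    by (rule grid_l2_cong)
  also have "\<dots> \<le> sqrt (h * real M) * (K * (1 + Vm + Am) * (h\<^sup>2 / \<epsilon> + \<tau>\<^sup>2 / \<epsilon> ^ 3))"
    unfolding u_def
    using dirac_solution_cnfd_residual[OF assms(1-3,5,6) k _ cV cA Vm[OF t grid] Am[OF t grid]]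
      \<open>h > 0\<close> bound_nonneg
    by (intro grid_l2_le) auto
  finally have "\<tau> * grid_l2 M h (cnfd_residual \<epsilon> V A1 a h M \<tau> e k)
      \<le> \<tau> * (sqrt (b - a) * (K * (1 + Vm + Am) * (h\<^sup>2 / \<epsilon> + \<tau>\<^sup>2 / \<epsilon> ^ 3)))"
    using \<open>\<tau> > 0\<close> unfolding \<open>h * real M = b - a\<close> by (intro mult_left_mono) auto
  then show ?thesis
    using cnfd_l2_stability[OF \<open>M > 0\<close> \<open>h > 0\<close> \<open>\<tau> > 0\<close>, of e k \<epsilon> V A1 a] by (simp add: e_def u_def)
qed

lemma dirac_solution_cnfd_error:
  assumes "a < b" "0 < \<epsilon>" "\<epsilon> \<le> 1" "M > 0" "h = (b - a) / real M" "\<tau> > 0"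
    and cV: "continuous_on ({0..T} \<times> {a..b}) (\<lambda>(t, x). V t x)"
    and cA: "continuous_on ({0..T} \<times> {a..b}) (\<lambda>(t, x). A1 t x)"
    and Vm: "\<And>t x. t \<in> {0..T} \<Longrightarrow> x \<in> {a..b} \<Longrightarrow> \<bar>V t x\<bar> \<le> Vm"
    and Am: "\<And>t x. t \<in> {0..T} \<Longrightarrow> x \<in> {a..b} \<Longrightarrow> \<bar>A1 t x\<bar> \<le> Am"
    and cn: "cnfd_solution a b T \<epsilon> V A1 (D 0 0 0) M \<tau> P"
    and "real n * \<tau> \<le> T"
  shows "grid_l2 M h (\<lambda>j. D 0 0 (real n * \<tau>) (a + real j * h) - P n j)
           \<le> T * sqrt (b - a) * (K * (1 + Vm + Am)) * (h\<^sup>2 / \<epsilon> + \<tau>\<^sup>2 / \<epsilon> ^ 3)"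
proof -
  define \<beta> where "\<beta> = sqrt (b - a) * (K * (1 + Vm + Am) * (h\<^sup>2 / \<epsilon> + \<tau>\<^sup>2 / \<epsilon> ^ 3))"
  have "0 \<le> real n * \<tau>"
    using \<open>\<tau> > 0\<close> by simp
  then have "0 \<le> T"
    using \<open>real n * \<tau> \<le> T\<close> by linarith
  then have "0 \<le> \<beta>"
    using dirac_solution_const_nonneg[of 0 a] Vm[of 0 a] Am[of 0 a] \<open>a < b\<close> \<open>\<epsilon> > 0\<close> by (simp add: \<beta>_def)
  have "grid_l2 M h (\<lambda>j. D 0 0 (real n * \<tau>) (a + real j * h) - P n j) \<le> real n * \<tau> * \<beta>"
  proof (rule linear_growth_bound[where S = "\<lambda>k. grid_l2 M h (\<lambda>j. D 0 0 (real k * \<tau>) (a + real j * h) - P k j)"])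
    have "grid_l2 M h (\<lambda>j. D 0 0 (real 0 * \<tau>) (a + real j * h) - P 0 j) = grid_l2 M h (\<lambda>j. 0)"
      by (rule grid_l2_cong) (simp add: cnfd_solution_initial[OF cn \<open>h = (b - a) / real M\<close>])
    also have "\<dots> = 0"
      by (simp add: grid_l2_def)
    finally show "grid_l2 M h (\<lambda>j. D 0 0 (real 0 * \<tau>) (a + real j * h) - P 0 j) \<le> 0"
      by simp
  qed (use dirac_solution_cnfd_error_step[OF assms(1-11)] assms in \<open>auto simp: \<beta>_def\<close>)
  also have "\<dots> \<le> T * \<beta>"
    using \<open>real n * \<tau> \<le> T\<close> \<open>0 \<le> \<beta>\<close> by (rule mult_right_mono)
  finally show ?thesis
    by (simp add: \<beta>_def mult_ac)
qed
end

lemma cnfd_convergence: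
  fixes Phi :: "real \<Rightarrow> nat \<Rightarrow> nat \<Rightarrow> real \<Rightarrow> real \<Rightarrow> complex^2"
  assumes "a < b" "0 < T"
    and cV: "continuous_on ({0..T} \<times> {a..b}) (\<lambda>(t, x). V t x)"
    and cA: "continuous_on ({0..T} \<times> {a..b}) (\<lambda>(t, x). A1 t x)"
    and sol: "\<forall>\<epsilon>. 0 < \<epsilon> \<and> \<epsilon> \<le> 1 \<longrightarrow> dirac_solution a b T K \<epsilon> V A1 (Phi \<epsilon>)"
  obtains C where "C > 0"
    and "\<And>\<epsilon> M \<tau> P n. 0 < \<epsilon> \<Longrightarrow> \<epsilon> \<le> 1 \<Longrightarrow> 0 < M \<Longrightarrow> 0 < \<tau> \<Longrightarrow>
      cnfd_solution a b T \<epsilon> V A1 (Phi \<epsilon> 0 0 0) M \<tau> P \<Longrightarrow> real n * \<tau> \<le> T \<Longrightarrow>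
      grid_l2 M ((b - a) / real M) (\<lambda>j. Phi \<epsilon> 0 0 (real n * \<tau>) (a + real j * ((b - a) / real M)) - P n j)
        \<le> C * (((b - a) / real M)\<^sup>2 / \<epsilon> + \<tau>\<^sup>2 / \<epsilon> ^ 3)"
proof -
  obtain Vm Am where Vm: "\<And>t x. t \<in> {0..T} \<Longrightarrow> x \<in> {a..b} \<Longrightarrow> \<bar>V t x\<bar> \<le> Vm"
    and Am: "\<And>t x. t \<in> {0..T} \<Longrightarrow> x \<in> {a..b} \<Longrightarrow> \<bar>A1 t x\<bar> \<le> Am"
    using continuous_on_Times_bounded[OF compact_Icc compact_Icc cV]
      continuous_on_Times_bounded[OF compact_Icc compact_Icc cA] by (metis real_norm_def)
  have "dirac_solution a b T K 1 V A1 (Phi 1)"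
    using sol by simp
  from dirac_solution_const_nonneg[OF this, of 0 a] have "0 \<le> K" "0 \<le> Vm" "0 \<le> Am"
    using Vm[of 0 a] Am[of 0 a] assms(1,2) by auto
  define C where "C = T * sqrt (b - a) * (K * (1 + Vm + Am)) + 1"
  have "0 \<le> T * sqrt (b - a) * (K * (1 + Vm + Am))"
    using \<open>0 \<le> K\<close> \<open>0 \<le> Vm\<close> \<open>0 \<le> Am\<close> assms(1,2) by simp
  then have "C > 0"
    unfolding C_def by linarith
  have bound: "grid_l2 M ((b - a) / real M) (\<lambda>j. Phi \<epsilon> 0 0 (real n * \<tau>) (a + real j * ((b - a) / real M)) - P n j)
      \<le> C * (((b - a) / real M)\<^sup>2 / \<epsilon> + \<tau>\<^sup>2 / \<epsilon> ^ 3)"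
    if "0 < \<epsilon>" "\<epsilon> \<le> 1" "0 < M" "0 < \<tau>" "cnfd_solution a b T \<epsilon> V A1 (Phi \<epsilon> 0 0 0) M \<tau> P" "real n * \<tau> \<le> T"
    for \<epsilon> M \<tau> P n
  proof -
    have sol\<epsilon>: "dirac_solution a b T K \<epsilon> V A1 (Phi \<epsilon>)"
      using sol that(1,2) by simp
    have "grid_l2 M ((b - a) / real M) (\<lambda>j. Phi \<epsilon> 0 0 (real n * \<tau>) (a + real j * ((b - a) / real M)) - P n j)
        \<le> T * sqrt (b - a) * (K * (1 + Vm + Am)) * (((b - a) / real M)\<^sup>2 / \<epsilon> + \<tau>\<^sup>2 / \<epsilon> ^ 3)"
      using Vm Am
      by (rule dirac_solution_cnfd_error[OF sol\<epsilon> assms(1) that(1-3) refl that(4) cV cA _ _ that(5,6)])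
    also have "\<dots> \<le> C * (((b - a) / real M)\<^sup>2 / \<epsilon> + \<tau>\<^sup>2 / \<epsilon> ^ 3)"
      by (rule mult_right_mono) (use \<open>0 < \<epsilon>\<close> in \<open>simp_all add: C_def\<close>)
    finally show ?thesis .
  qed
  show thesis
    by (rule that[OF \<open>C > 0\<close>]) (rule bound)
qed

theorem theorem1:
  fixes a b T :: real
    and V A1 :: "real \<Rightarrow> real \<Rightarrow> real"
    and Phi :: "real \<Rightarrow> nat \<Rightarrow> nat \<Rightarrow> real \<Rightarrow> real \<Rightarrow> complex^2"
  assumes "a < b" and "0 < T"
    and "continuous_on ({0..T} \<times> {a..b}) (\<lambda>(t,x). V t x)"
    and "continuous_on ({0..T} \<times> {a..b}) (\<lambda>(t,x). A1 t x)"
    and "\<exists>K. \<forall>\<epsilon>. 0 < \<epsilon> \<and> \<epsilon> \<le> 1 \<longrightarrow> dirac_solution a b T K \<epsilon> V A1 (Phi \<epsilon>)"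
  shows "\<exists>h0 > 0. \<exists>\<tau>0 > 0. \<exists>C > 0. \<forall>\<epsilon> M \<tau> P n.
           0 < \<epsilon> \<and> \<epsilon> \<le> 1 \<and> 0 < M \<and> (b - a) / real M \<le> h0 \<and> 0 < \<tau> \<and> \<tau> \<le> \<tau>0 \<and>
           cnfd_solution a b T \<epsilon> V A1 (Phi \<epsilon> 0 0 0) M \<tau> P \<and> real n * \<tau> \<le> T \<longrightarrow>
           grid_l2 M ((b - a) / real M) (\<lambda>j. Phi \<epsilon> 0 0 (real n * \<tau>) (a + real j * ((b - a) / real M)) - P n j)
             \<le> C * (((b - a) / real M)\<^sup>2 / \<epsilon> + \<tau>\<^sup>2 / \<epsilon> ^ 3)"
proof -
  obtain K where "\<forall>\<epsilon>. 0 < \<epsilon> \<and> \<epsilon> \<le> 1 \<longrightarrow> dirac_solution a b T K \<epsilon> V A1 (Phi \<epsilon>)"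
    using assms(5) by blast
  then show ?thesis
    \<comment> \<open>The bound holds for every \<open>h\<close> and \<open>\<tau>\<close>, so \<open>h0 = \<tau>0 = 1\<close> is an arbitrary choice.\<close>
    by (rule cnfd_convergence[OF assms(1-4)]) (use zero_less_one in blast)
qed

end
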